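(* Let $N\ge 3$ and let $\mathbf{g}=\mathbf{1}_{[0,W-1]}\in\mathbb{R}^N$ be the rectangular window ($\mathbf{g}[n]=1$ for $0\le n\le W-1$ and $0$ for $W\le n\le N-1$). Suppose (1) $2\le W\le N-1$, and (2) $N$ is coprime to $W$ and to $W-1$. Then for every non-vanishing $\mathbf{x}\in\mathbb{C}^N$, the algebraic algorithm described in the context, applied to the STFT magnitude $|\mathbf{X}[m,k]|^2$ of $\mathbf{x}$ with this window and $L=1$, outputs $e^{i\phi}\mathbf{x}$ for some $\phi\in\mathbb{R}$.
   Context: A vector $\mathbf{x}$ is non-vanishing if $\mathbf{x}[n]\ne0$ for all $n$. Signals and windows are indexed by $\{0,\dots,N-1\}$ and extended $N$-periodically. The STFT of $\mathbf{x}\in\mathbb{C}^N$ with window $\mathbf{g}$ and step $L=1$ is $\mathbf{X}[m,k]=\sum_{n=0}^{N-1}\mathbf{x}[n]\mathbf{g}[m-n]e^{-2\pi i kn/N}$, $m,k=0,\dots,N-1$. Algebraic algorithm: given $\mathbf{Y}[m,k]=|\mathbf{X}[m,k]|^2$, (1) compute $\mathbf{Z}[m,\ell]=\sum_{k=0}^{N-1}\mathbf{Y}[m,k]e^{-2\pi i k\ell/N}$ and $\mathbf{z}_\ell=(\mathbf{Z}[m,\ell])_{m=0}^{N-1}$; (2) for $\ell=0,1$ compute $\mathbf{x}_\ell=\frac1N\mathbf{G}_\ell^{-1}\mathbf{z}_\ell$, where $\mathbf{G}_\ell$ is the $N\times N$ circulant matrix with first column $(\mathbf{g}[m]\overline{\mathbf{g}[(m-\ell)\bmod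 N]})_{m=0}^{N-1}$, and set $\hat{\mathbf{x}}[0]=\sqrt{\mathbf{x}_0[0]}$; (3) recursively for $n=0,\dots,N-2$ define $\hat{\mathbf{x}}[n+1]$ by $\overline{\hat{\mathbf{x}}[n+1]}=\mathbf{x}_1[n]/\hat{\mathbf{x}}[n]$; output $\hat{\mathbf{x}}$. *)

theory Defs
  imports Complex_Main
begin

text \<open>Vectors in C^N are functions nat => complex; only indices 0..N-1 matter,
  and indices are reduced mod N (N-periodic extension).\<close>

definition rect_window :: "nat \<Rightarrow> nat \<Rightarrow> nat \<Rightarrow> complex" where
  "rect_window N W n = (if n mod N < W then 1 else 0)"

definition stft :: "nat \<Rightarrow> (nat \<Rightarrow> complex) \<Rightarrow> (nat \<Rightarrow> complex) \<Rightarrow> nat \<Rightarrow> nat \<Rightarrow> complex" where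
  "stft N g x m k = (\<Sum>n<N. x n * g ((m + N - n) mod N) * cis (- 2 * pi * real k * real n / real N))"

definition stft_mag2 :: "nat \<Rightarrow> (nat \<Rightarrow> complex) \<Rightarrow> (nat \<Rightarrow> complex) \<Rightarrow> nat \<Rightarrow> nat \<Rightarrow> complex" where
  "stft_mag2 N g x m k = complex_of_real ((cmod (stft N g x m k))\<^sup>2)"

definition alg_Z :: "nat \<Rightarrow> (nat \<Rightarrow> nat \<Rightarrow> complex) \<Rightarrow> nat \<Rightarrow> nat \<Rightarrow> complex" where
  "alg_Z N Y m l = (\<Sum>k<N. Y m k * cis (- 2 * pi * real k * real l / real N))"

definition circ_col :: "nat \<Rightarrow> (nat \<Rightarrow> complex) \<Rightarrow> nat \<Rightarrow> nat \<Rightarrow> complex" where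
  "circ_col N g l m = g (m mod N) * cnj (g ((m + N - l mod N) mod N))"

definition circ_G :: "nat \<Rightarrow> (nat \<Rightarrow> complex) \<Rightarrow> nat \<Rightarrow> nat \<Rightarrow> nat \<Rightarrow> complex" where
  "circ_G N g l m j = circ_col N g l ((m + N - j) mod N)"

text \<open>Step (2): x_l = (1/N) G_l^{-1} z_l, i.e. the unique vector v (supported on 0..N-1)
  with G_l v = z_l / N.\<close>
definition alg_x :: "nat \<Rightarrow> (nat \<Rightarrow> complex) \<Rightarrow> (nat \<Rightarrow> nat \<Rightarrow> complex) \<Rightarrow> nat \<Rightarrow> nat \<Rightarrow> complex" where
  "alg_x N g Y l = (THE v. (\<forall>i\<ge>N. v i = 0) \<and>
      (\<forall>m<N. (\<Sum>j<N. circ_G N g l m j * v j) = alg_Z N Y m l / of_nat N))"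

primrec alg_out :: "nat \<Rightarrow> (nat \<Rightarrow> complex) \<Rightarrow> (nat \<Rightarrow> nat \<Rightarrow> complex) \<Rightarrow> nat \<Rightarrow> complex" where
  "alg_out N g Y 0 = csqrt (alg_x N g Y 0 0)"
| "alg_out N g Y (Suc n) = cnj (alg_x N g Y 1 n / alg_out N g Y n)"

end

theory Submission
  imports Defs "HOL-Library.Real_Mod"
begin

text \<open>
  Expanding \<open>|X[m,k]|\<^sup>2\<close> and taking the DFT in \<open>k\<close>, orthogonality of the characters
  gives \<open>z\<^sub>\<ell> = N G\<^sub>\<ell> x\<^sub>\<ell>\<close> with the lag products \<open>x\<^sub>\<ell>[n] = x[n] conj(x[n+\<ell>])\<close>, so step (2)
  recovers them as soon as \<open>G\<^sub>\<ell>\<close> is injective. For the rectangular window, \<open>G\<^sub>\<ell> v = 0\<close>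
  says that every sum of \<open>W - \<ell>\<close> consecutive entries of the \<open>N\<close>-periodic sequence \<open>v\<close>
  vanishes; comparing consecutive sums makes \<open>v\<close> also \<open>(W - \<ell>)\<close>-periodic, hence constant
  when \<open>W - \<ell>\<close> is coprime to \<open>N\<close>, hence zero. With \<open>x\<^sub>0[0] = |x[0]|\<^sup>2\<close> and \<open>x\<^sub>1\<close> known, step (3)
  telescopes to \<open>cis (- Arg (x 0)) * x\<close>.
\<close>

lemma sum_cis_multiple_eq:
  fixes N :: nat and t :: int
  assumes N: "N > 0"
  shows "(\<Sum>k<N. cis (2 * pi * real k * of_int t / real N)) =
         (if int N dvd t then of_nat N else 0)"
proof -
  define z where "z = cis (2 * pi * of_int t / real N)"
  have powers: "cis (2 * pi * real k * of_int t / real N) = z ^ k" for k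
    unfolding z_def DeMoivre by (simp add: field_simps)
  have z_eq_1_iff: "z = 1 \<longleftrightarrow> int N dvd t"
  proof -
    have "z = 1 \<longleftrightarrow> (\<exists>n. of_int t = real N * of_int n)"
      unfolding z_def cis_eq_1_iff using N by (auto simp: field_simps)
    also have "\<dots> \<longleftrightarrow> (\<exists>n. t = int N * n)"
      by (metis of_int_eq_iff of_int_mult of_int_of_nat_eq)
    finally show ?thesis by (auto simp: dvd_def)
  qed
  have "z ^ N = 1"
    unfolding z_def DeMoivre using N by simp
  then show ?thesis
    using geometric_sum[of z N] z_eq_1_iff by (auto simp: powers)
qed

lemma int_mod_add_diff:
  fixes m j N :: nat
  assumes "j \<le> N"
  shows "int ((m + N - j) mod N) = (int m - int j) mod int N"
proof -
  have "int (m + N - j) = int m - int j + int N" using assms by simp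
  then show ?thesis by (metis mod_add_self2 zmod_int)
qed

lemma mod_add_diff_involution:
  fixes m j N :: nat
  assumes "j < N"
  shows "(m + N - (m + N - j) mod N) mod N = j"
proof -
  have "int ((m + N - (m + N - j) mod N) mod N) = (int m - (int m - int j) mod int N) mod int N"
    using assms by (simp add: int_mod_add_diff less_imp_le)
  also have "\<dots> = int j"
    using assms by (simp add: mod_diff_right_eq)
  finally show ?thesis by simp
qed

lemma sum_mod_reflect:
  fixes f :: "nat \<Rightarrow> nat \<Rightarrow> 'a::comm_monoid_add" and m N :: nat
  shows "(\<Sum>j<N. f ((m + N - j) mod N) j) = (\<Sum>i<N. f i ((m + N - i) mod N))"
  by (rule sum.reindex_bij_witness[where i="\<lambda>i. (m + N - i) mod N" and j="\<lambda>j. (m + N - j) mod N"])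
    (auto simp: mod_add_diff_involution)

lemma sum_cis_lag_eq:
  fixes N n n' l :: nat
  assumes "n < N" "n' < N" "l < N"
  shows "(\<Sum>k<N. cis (2 * pi * real k * (real n' - real n - real l) / real N)) =
         (if n' = (n + l) mod N then of_nat N else 0)"
proof -
  have "int N dvd (int n' - int n - int l) \<longleftrightarrow> int n' mod int N = (int n + int l) mod int N"
    by (simp add: diff_diff_eq mod_eq_dvd_iff)
  also have "\<dots> \<longleftrightarrow> n' = (n + l) mod N"
    using assms by (metis mod_less nat_int of_nat_add of_nat_mod)
  finally have "int N dvd (int n' - int n - int l) \<longleftrightarrow> n' = (n + l) mod N" .
  moreover have "real n' - real n - real l = of_int (int n' - int n - int l)" by simp
  ultimately show ?thesis
    using sum_cis_multiple_eq[of N "int n' - int n - int l"] assms by simp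
qed

lemma circ_G_eq:
  fixes N l m j :: nat
  assumes "j < N" "l < N"
  shows "circ_G N g l m j = g ((m + N - j) mod N) * cnj (g ((m + N - (j + l) mod N) mod N))"
proof -
  have "int (((m + N - j) mod N + N - l) mod N) = (int m - int j - int l) mod int N"
    using assms by (simp add: int_mod_add_diff less_imp_le mod_diff_left_eq)
  also have "\<dots> = (int m - int ((j + l) mod N)) mod int N"
    by (simp add: zmod_int mod_diff_right_eq diff_diff_eq)
  also have "\<dots> = int ((m + N - (j + l) mod N) mod N)"
    using assms by (simp add: int_mod_add_diff less_imp_le)
  finally show ?thesis
    using assms unfolding circ_G_def circ_col_def by simp
qed

definition lag_product :: "nat \<Rightarrow> (nat \<Rightarrow> complex) \<Rightarrow> nat \<Rightarrow> nat \<Rightarrow> complex" where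
  "lag_product N x l j = (if j < N then x j * cnj (x ((j + l) mod N)) else 0)"

lemma alg_Z_stft_mag2:
  fixes N l m :: nat and g x :: "nat \<Rightarrow> complex"
  assumes l: "l < N" and m: "m < N"
  shows "alg_Z N (stft_mag2 N g x) m l =
    of_nat N * (\<Sum>j<N. circ_G N g l m j * lag_product N x l j)"
proof -
  define a where "a n = x n * g ((m + N - n) mod N)" for n
  define e where "e k n = cis (- 2 * pi * real k * real n / real N)" for k n :: nat
  have character_product:
    "e k n * cnj (e k n') * e k l = cis (2 * pi * real k * (real n' - real n - real l) / real N)"
    for k n n'
    unfolding e_def cis_cnj cis_mult
    by (rule arg_cong[where f=cis]) (simp add: algebra_simps add_divide_distrib diff_divide_distrib)
  have "alg_Z N (stft_mag2 N g x) m l =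
      (\<Sum>k<N. (\<Sum>n<N. a n * e k n) * cnj (\<Sum>n'<N. a n' * e k n') * e k l)"
    unfolding alg_Z_def stft_mag2_def stft_def complex_norm_square a_def e_def
    by (simp add: mult.assoc)
  also have "\<dots> = (\<Sum>k<N. \<Sum>n<N. \<Sum>n'<N. a n * cnj (a n') * (e k n * cnj (e k n') * e k l))"
    unfolding cnj_sum complex_cnj_mult sum_product sum_distrib_right
    by (intro sum.cong refl) (simp add: sum_distrib_left mult_ac)
  also have "\<dots> = (\<Sum>n<N. \<Sum>k<N. \<Sum>n'<N. a n * cnj (a n') * (e k n * cnj (e k n') * e k l))"
    by (rule sum.swap)
  also have "\<dots> = (\<Sum>n<N. \<Sum>n'<N. a n * cnj (a n') * (\<Sum>k<N. e k n * cnj (e k n') * e k l))"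
    unfolding sum_distrib_left by (intro sum.cong refl sum.swap)
  also have "\<dots> = (\<Sum>n<N. \<Sum>n'<N. a n * cnj (a n') * (if n' = (n + l) mod N then of_nat N else 0))"
    using l by (intro sum.cong refl) (simp add: character_product sum_cis_lag_eq)
  also have "\<dots> = (\<Sum>n<N. of_nat N * (a n * cnj (a ((n + l) mod N))))"
    using m by (simp add: if_distrib sum.delta' mult_ac cong: if_cong)
  also have "\<dots> = of_nat N * (\<Sum>j<N. circ_G N g l m j * lag_product N x l j)"
    unfolding sum_distrib_left
    using l by (intro sum.cong refl) (simp add: circ_G_eq lag_product_def a_def mult_ac)
  finally show ?thesis .
qed

lemma alg_x_stft_mag2:
  fixes N l :: nat and g x :: "nat \<Rightarrow> complex"
  assumes l: "l < N"
    and kernel: "\<And>v j. (\<And>m. m < N \<Longrightarrow> (\<Sum>j<N. circ_G N g l m j * v j) = 0) \<Longrightarrow> j < N \<Longrightarrow> v j = 0"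
  shows "alg_x N g (stft_mag2 N g x) l = lag_product N x l"
  unfolding alg_x_def
proof (rule the_equality)
  let ?Y = "stft_mag2 N g x"
  have solves: "(\<Sum>j<N. circ_G N g l m j * lag_product N x l j) = alg_Z N ?Y m l / of_nat N"
    if "m < N" for m
    using alg_Z_stft_mag2[OF l that] that by simp
  then show "(\<forall>i\<ge>N. lag_product N x l i = 0) \<and>
      (\<forall>m<N. (\<Sum>j<N. circ_G N g l m j * lag_product N x l j) = alg_Z N ?Y m l / of_nat N)"
    by (simp add: lag_product_def)
  fix v
  assume v: "(\<forall>i\<ge>N. v i = 0) \<and> (\<forall>m<N. (\<Sum>j<N. circ_G N g l m j * v j) = alg_Z N ?Y m l / of_nat N)"
  have "v j - lag_product N x l j = 0" if "j < N" for j
  proof (rule kernel[OF _ that])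
    fix m assume "m < N"
    then show "(\<Sum>j<N. circ_G N g l m j * (v j - lag_product N x l j)) = 0"
      using v solves by (simp add: right_diff_distrib sum_subtractf)
  qed
  with v show "v = lag_product N x l"
    by (auto simp: fun_eq_iff lag_product_def)
qed

lemma periodic_add_mult:
  fixes u :: "int \<Rightarrow> 'a"
  assumes periodic: "\<And>a. u (a + p) = u a"
  shows "u (a + k * p) = u a"
proof (induction k rule: int_induct[where k = 0])
  case (step1 i)
  then show ?case using periodic[of "a + i * p"] by (simp add: algebra_simps)
next
  case (step2 i)
  then show ?case using periodic[of "a + (i - 1) * p"] by (simp add: algebra_simps)
qed simp

lemma periodic_window_sums_zero:
  fixes u :: "int \<Rightarrow> 'a::field_char_0" and N d :: nat
  assumes "coprime d N" and "d > 0"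
    and periodic: "\<And>a. u (a + int N) = u a"
    and window_sums: "\<And>a. (\<Sum>i<d. u (a - int i)) = 0"
  shows "u a = 0"
proof -
  obtain e where d: "d = Suc e" using \<open>d > 0\<close> gr0_implies_Suc by blast
  have d_periodic: "u (b + int d) = u b" for b
  proof -
    have "(\<Sum>i<d. u (b + int d - int i)) = u (b + int d) + (\<Sum>i<e. u (b + int e - int i))"
      unfolding d sum.lessThan_Suc_shift by (simp add: algebra_simps)
    moreover have "(\<Sum>i<d. u (b + int e - int i)) = (\<Sum>i<e. u (b + int e - int i)) + u b"
      unfolding d sum.lessThan_Suc by simp
    ultimately show ?thesis
      using window_sums[of "b + int d"] window_sums[of "b + int e"] by (simp add: add_eq_0_iff)
  qed
  obtain s t where bezout: "s * int d + t * int N = 1"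
    using \<open>coprime d N\<close> bezout_int[of "int d" "int N"] by (auto simp: coprime_int_iff)
  have u_constant: "u b = u 0" for b
  proof -
    have "u (c + 1) = u c" for c
    proof -
      have "u (c + 1) = u ((c + s * int d) + t * int N)"
        using bezout by (simp add: algebra_simps)
      also have "\<dots> = u (c + s * int d)"
        by (rule periodic_add_mult[where u = u, OF periodic])
      also have "\<dots> = u c"
        by (rule periodic_add_mult[where u = u, OF d_periodic])
      finally show ?thesis .
    qed
    then show ?thesis
      using periodic_add_mult[of u 1 0 b] by simp
  qed
  have "of_nat d * u 0 = 0"
    using window_sums[of 0] by (simp add: u_constant[of "- int _"])
  with \<open>d > 0\<close> show ?thesis by (simp add: u_constant[of a])
qed

lemma circ_col_rect_window:
  fixes N W l i :: nat
  assumes "W + l \<le> N" and "i < N"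
  shows "circ_col N (rect_window N W) l i = (if l \<le> i \<and> i < W then 1 else 0)"
proof (cases "l \<le> i")
  case True
  with assms have "i + N - l mod N = (i - l) + N"
    by simp
  then have "(i + N - l mod N) mod N = i - l"
    using assms by simp
  then show ?thesis
    using True assms unfolding circ_col_def rect_window_def by auto
next
  case False
  then have "(i + N - l mod N) mod N = i + N - l"
    using assms by (cases "l = N") auto
  then show ?thesis
    using False assms unfolding circ_col_def rect_window_def by auto
qed

lemma circ_G_rect_window_row:
  fixes N W l m :: nat and v :: "nat \<Rightarrow> complex"
  assumes "W + l \<le> N"
  shows "(\<Sum>j<N. circ_G N (rect_window N W) l m j * v j) = (\<Sum>i=l..<W. v ((m + N - i) mod N))"
proof -
  have "(\<Sum>j<N. circ_G N (rect_window N W) l m j * v j) =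
      (\<Sum>j<N. if l \<le> (m + N - j) mod N \<and> (m + N - j) mod N < W then v j else 0)"
    using assms by (intro sum.cong refl) (simp add: circ_G_def circ_col_rect_window)
  also have "\<dots> = (\<Sum>i<N. if l \<le> i \<and> i < W then v ((m + N - i) mod N) else 0)"
    by (rule sum_mod_reflect)
  also have "\<dots> = (\<Sum>i\<in>{i \<in> {..<N}. l \<le> i \<and> i < W}. v ((m + N - i) mod N))"
    by (rule sum.inter_filter[symmetric]) simp
  also have "{i \<in> {..<N}. l \<le> i \<and> i < W} = {l..<W}"
    using assms by auto
  finally show ?thesis .
qed

lemma circ_G_rect_window_kernel:
  fixes N W l j :: nat and v :: "nat \<Rightarrow> complex"
  assumes "W + l \<le> N" and "l < W" and "coprime N (W - l)"
    and kernel: "\<And>m. m < N \<Longrightarrow> (\<Sum>j<N. circ_G N (rect_window N W) l m j * v j) = 0"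
    and "j < N"
  shows "v j = 0"
proof -
  define u where "u a = v (nat (a mod int N))" for a
  have N: "N > 0" using \<open>j < N\<close> by simp
  have "(\<Sum>i<W - l. u (a - int i)) = 0" for a
  proof -
    define m where "m = nat ((a + int l) mod int N)"
    have "m < N" and int_m: "int m = (a + int l) mod int N"
      using N by (simp_all add: m_def nat_less_iff)
    have "v ((m + N - i) mod N) = u (a + int l - int i)" if "i < N" for i
    proof -
      have "int ((m + N - i) mod N) = (a + int l - int i) mod int N"
        using that int_m by (simp add: int_mod_add_diff mod_diff_left_eq)
      then show ?thesis
        unfolding u_def by (metis nat_int)
    qed
    then have "(\<Sum>i=l..<W. v ((m + N - i) mod N)) = (\<Sum>i=l..<W. u (a + int l - int i))"
      using assms(1) by (intro sum.cong refl) auto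
    also have "\<dots> = (\<Sum>i<W - l. u (a - int i))"
      by (simp add: sum.atLeastLessThan_shift_0 atLeast0LessThan)
    finally show ?thesis
      using kernel[OF \<open>m < N\<close>] circ_G_rect_window_row[OF assms(1)] by simp
  qed
  moreover have "coprime (W - l) N"
    using assms(3) by (simp add: coprime_commute)
  moreover have "u (a + int N) = u a" for a
    by (simp add: u_def)
  ultimately have "u (int j) = 0"
    using \<open>l < W\<close> by (metis periodic_window_sums_zero zero_less_diff)
  with \<open>j < N\<close> show ?thesis
    by (simp add: u_def)
qed

lemma alg_out_eq_cis_mult:
  fixes N :: nat and g x :: "nat \<Rightarrow> complex" and Y :: "nat \<Rightarrow> nat \<Rightarrow> complex"
  assumes nonvanishing: "\<forall>n<N. x n \<noteq> 0"
    and x0: "alg_x N g Y 0 = lag_product N x 0"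
    and x1: "alg_x N g Y 1 = lag_product N x 1"
    and "n < N"
  shows "alg_out N g Y n = cis (- Arg (x 0)) * x n"
  using \<open>n < N\<close>
proof (induction n)
  case 0
  have "alg_out N g Y 0 = csqrt (x 0 * cnj (x 0))"
    using 0 by (simp add: x0 lag_product_def)
  also have "x 0 * cnj (x 0) = complex_of_real ((cmod (x 0))\<^sup>2)"
    by (rule complex_norm_square[symmetric])
  also have "csqrt \<dots> = cis (- Arg (x 0)) * rcis (cmod (x 0)) (Arg (x 0))"
    by (simp add: rcis_def cis_mult)
  finally show ?case
    by (simp add: rcis_cmod_Arg)
next
  case (Suc n)
  then have "x n \<noteq> 0"
    using nonvanishing by simp
  with Suc show ?case
    unfolding alg_out.simps x1 by (simp add: lag_product_def cis_cnj divide_inverse mult.commute)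
qed

theorem corollary2:
  fixes N W :: nat and x :: "nat \<Rightarrow> complex"
  assumes "N \<ge> 3"
    and "2 \<le> W" and "W \<le> N - 1"
    and "coprime N W" and "coprime N (W - 1)"
    and "\<forall>n<N. x n \<noteq> 0"
  shows "\<exists>\<phi>::real. \<forall>n<N.
           alg_out N (rect_window N W) (stft_mag2 N (rect_window N W) x) n = cis \<phi> * x n"
proof -
  let ?g = "rect_window N W"
  have lag_products: "alg_x N ?g (stft_mag2 N ?g x) l = lag_product N x l"
    if "l \<le> 1" and coprime: "coprime N (W - l)" for l
  proof (rule alg_x_stft_mag2)
    show "l < N"
      using that assms(1) by simp
    show "v j = 0"
      if "\<And>m. m < N \<Longrightarrow> (\<Sum>j<N. circ_G N ?g l m j * v j) = 0" and "j < N" for v j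
      using circ_G_rect_window_kernel[OF _ _ coprime that] \<open>l \<le> 1\<close> assms(2,3) by simp
  qed
  have "alg_x N ?g (stft_mag2 N ?g x) 0 = lag_product N x 0"
    using lag_products[of 0] assms(4) by simp
  moreover have "alg_x N ?g (stft_mag2 N ?g x) 1 = lag_product N x 1"
    using lag_products[of 1] assms(5) by simp
  ultimately show ?thesis
    using alg_out_eq_cis_mult assms(6) by blast
qed

end
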